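(* Let $V$ be a manifold (not necessarily Hausdorff) with a regular $C^r$-differentiable structure, $r\geq 1$. If a real-valued $C^r$ function $f$ on $V$ is of rank $1$ at a point $x\in V$, then $f$ is also of rank $1$ at every point $y\in V$ which is not separated from $x$.
   Context: A $C^r$-differentiable structure ($r$ a positive integer or $\infty$) on an $n$-dimensional (not necessarily Hausdorff) manifold $V$ is given by an atlas of charts $h_i:\mathbb{R}^n\to V$ (homeomorphisms onto open sets covering $V$) whose transition maps $h_j^{-1}h_i$ are $C^r$ homeomorphisms between open subsets of $\mathbb{R}^n$. A function $f:V\to\mathbb{R}$ (or defined on an open subset) is $C^r$ if $f h_i$ is $C^r$ for every chart $h_i$ of the atlas; it is of rank $1$ at $x$ if for a chart $h_i$ whose image contains $x$, $f h_i$ has a nonzero partial derivative at $h_i^{-1}(x)$ (independent of the chart). The structure is regular if for every $x\in V$ and every $C^r$ function $f$ defined on a neighborhood of $x$, there is a $C^r$ function $f'$ defined on all of $V$ coinciding with $f$ on a neighborhood of $x$. Two points $x,y$ are not separated if every neighborhood of $x$ meets every neighborhood of $y$. *)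

theory Defs
  imports "HOL-Analysis.Analysis" "HOL-Library.Extended_Nat"
begin

definition has_partial_deriv :: "(real^'n \<Rightarrow> real) \<Rightarrow> 'n \<Rightarrow> real^'n \<Rightarrow> real \<Rightarrow> bool" where
  "has_partial_deriv g i u d \<longleftrightarrow>
     ((\<lambda>t. g (u + t *\<^sub>R axis i 1)) has_real_derivative d) (at 0)"

primrec Ck_on :: "nat \<Rightarrow> (real^'n) set \<Rightarrow> (real^'n \<Rightarrow> real) \<Rightarrow> bool" where
  "Ck_on 0 S g = continuous_on S g"
| "Ck_on (Suc k) S g = (continuous_on S g \<and>
     (\<forall>i. \<exists>g'. (\<forall>u\<in>S. has_partial_deriv g i u (g' u)) \<and> Ck_on k S g'))"

definition Cr_on :: "enat \<Rightarrow> (real^'n) set \<Rightarrow> (real^'n \<Rightarrow> real) \<Rightarrow> bool" where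
  "Cr_on r S g \<longleftrightarrow> (\<forall>k. enat k \<le> r \<longrightarrow> Ck_on k S g)"

definition Cr_map_on :: "enat \<Rightarrow> (real^'n) set \<Rightarrow> (real^'n \<Rightarrow> real^'n) \<Rightarrow> bool" where
  "Cr_map_on r S \<tau> \<longleftrightarrow> (\<forall>j. Cr_on r S (\<lambda>u. \<tau> u $ j))"

definition is_chart :: "'a topology \<Rightarrow> (real^'n \<Rightarrow> 'a) \<Rightarrow> bool" where
  "is_chart V h \<longleftrightarrow> openin V (range h) \<and>
     homeomorphic_map euclidean (subtopology V (range h)) h"

text \<open>Transition map h_j^{-1} h_i, defined on h_i^{-1}(h_j(R^n)).\<close>
definition transition :: "(real^'n \<Rightarrow> 'a) \<Rightarrow> (real^'n \<Rightarrow> 'a) \<Rightarrow> real^'n \<Rightarrow> real^'n" where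
  "transition hi hj = (\<lambda>u. inv hj (hi u))"

definition Cr_structure :: "'a topology \<Rightarrow> (real^'n \<Rightarrow> 'a) set \<Rightarrow> enat \<Rightarrow> bool" where
  "Cr_structure V A r \<longleftrightarrow>
     (\<forall>h\<in>A. is_chart V h) \<and>
     (\<Union>h\<in>A. range h) = topspace V \<and>
     (\<forall>hi\<in>A. \<forall>hj\<in>A. Cr_map_on r (hi -` range hj) (transition hi hj))"

definition Cr_fun_on :: "(real^'n \<Rightarrow> 'a) set \<Rightarrow> enat \<Rightarrow> 'a set \<Rightarrow> ('a \<Rightarrow> real) \<Rightarrow> bool" where
  "Cr_fun_on A r U f \<longleftrightarrow> (\<forall>h\<in>A. Cr_on r (h -` U) (f \<circ> h))"

definition rank1_at :: "(real^'n \<Rightarrow> 'a) set \<Rightarrow> ('a \<Rightarrow> real) \<Rightarrow> 'a \<Rightarrow> bool" where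
  "rank1_at A f x \<longleftrightarrow> (\<exists>h\<in>A. x \<in> range h \<and>
      (\<exists>i d. has_partial_deriv (f \<circ> h) i (inv h x) d \<and> d \<noteq> 0))"

definition regular_structure :: "'a topology \<Rightarrow> (real^'n \<Rightarrow> 'a) set \<Rightarrow> enat \<Rightarrow> bool" where
  "regular_structure V A r \<longleftrightarrow>
     (\<forall>x\<in>topspace V. \<forall>U f. openin V U \<and> x \<in> U \<and> Cr_fun_on A r U f \<longrightarrow>
        (\<exists>f'. Cr_fun_on A r (topspace V) f' \<and>
              (\<exists>W. openin V W \<and> x \<in> W \<and> W \<subseteq> U \<and> (\<forall>z\<in>W. f' z = f z))))"

definition not_separated :: "'a topology \<Rightarrow> 'a \<Rightarrow> 'a \<Rightarrow> bool" where
  "not_separated V x y \<longleftrightarrow>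
     (\<forall>U W. openin V U \<and> x \<in> U \<and> openin V W \<and> y \<in> W \<longrightarrow> U \<inter> W \<noteq> {})"

end

theory Submission
  imports Defs
begin

(* Let h be a chart at x with partial derivative d <> 0 of f o h in direction i at a = inv h x,
   let k be a chart at y, and suppose all partials of f o k vanish at b = inv k y.
   Regularity extends the coordinates of k to global C^r functions G_j; unlike the transition
   map inv k o h, which lives only on the preimage of range k, the functions G_j o h have
   partials that are continuous, hence bounded, near a.  Since x and y are not separated,
   there are open sets arbitrarily close to a that h maps into the image under k of an
   arbitrarily small cube around b; there f o h = (f o k) o (G o h), and f o k is
   eps-Lipschitz for the l1-norm on the cube.  This bounds the i-th partial of f o h by
   eps times the sum of those of the G_j o h at points arbitrarily close to a, contradicting
   its continuity at a. *)

definition cube :: "real^'n::finite \<Rightarrow> real \<Rightarrow> (real^'n) set" where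
  "cube c \<eta> = {w. \<forall>l. \<bar>w $ l - c $ l\<bar> < \<eta>}"

lemma open_cube: "open (cube (c :: real^'n::finite) \<eta>)"
proof -
  have "cube c \<eta> = box (c - (\<chi> l. \<eta>)) (c + (\<chi> l. \<eta>))"
    by (auto simp: cube_def mem_box_cart abs_less_iff algebra_simps)
  then show ?thesis by (simp only: open_box)
qed

lemma centre_in_cube: "\<eta> > 0 \<Longrightarrow> c \<in> cube c \<eta>"
  by (simp add: cube_def)

lemma cube_subset_ball: "cube (c :: real^'n::finite) (\<delta> / CARD('n)) \<subseteq> ball c \<delta>"
proof
  fix w :: "real^'n" assume w: "w \<in> cube c (\<delta> / CARD('n))"
  have "dist c w \<le> (\<Sum>l\<in>UNIV. \<bar>(w - c) $ l\<bar>)"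
    using norm_le_l1_cart[of "w - c"] by (simp add: dist_norm norm_minus_commute)
  also have "\<dots> < (\<Sum>l\<in>(UNIV::'n set). \<delta> / CARD('n))"
    using w by (intro sum_strict_mono) (auto simp: cube_def)
  also have "\<dots> = \<delta>" by simp
  finally show "w \<in> ball c \<delta>" by simp
qed

lemma eventually_nhds_cube:
  fixes c :: "real^'n::finite"
  assumes "eventually P (nhds c)"
  obtains \<eta> where "\<eta> > 0" "\<And>w. w \<in> cube c \<eta> \<Longrightarrow> P w"
proof -
  obtain \<delta> where "\<delta> > 0" "\<And>w. dist w c < \<delta> \<Longrightarrow> P w"
    using assms unfolding eventually_nhds_metric by blast
  then show ?thesis
    using that[of "\<delta> / CARD('n)"] cube_subset_ball[of c \<delta>] by (force simp: dist_commute)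
qed

lemma has_partial_deriv_along_line:
  assumes "has_partial_deriv F j (w + t *\<^sub>R axis j 1) D"
  shows "((\<lambda>s. F (w + s *\<^sub>R axis j 1)) has_real_derivative D) (at t)"
proof -
  have "((\<lambda>s. F (w + (t + s) *\<^sub>R axis j 1)) has_real_derivative D) (at 0)"
    using assms by (simp add: has_partial_deriv_def scaleR_add_left add.assoc)
  then show ?thesis
    using DERIV_shift[of "\<lambda>s. F (w + s *\<^sub>R axis j 1)" D 0 t] by (simp add: add.commute)
qed

(* Move from q to p one coordinate at a time; each step stays in the cube and is bounded by
   the one-dimensional mean value inequality. *)
lemma l1_lipschitz_on_cube:
  fixes F :: "real^'n::finite \<Rightarrow> real"
  assumes der: "\<And>j w. w \<in> cube c \<eta> \<Longrightarrow> has_partial_deriv F j w (F' j w)"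
    and bound: "\<And>j w. w \<in> cube c \<eta> \<Longrightarrow> \<bar>F' j w\<bar> \<le> \<epsilon>"
    and p: "p \<in> cube c \<eta>" and q: "q \<in> cube c \<eta>"
  shows "\<bar>F p - F q\<bar> \<le> \<epsilon> * (\<Sum>j\<in>UNIV. \<bar>p $ j - q $ j\<bar>)"
proof -
  define mix where "mix S = (\<chi> l. if l \<in> S then p $ l else q $ l)" for S
  have "\<bar>F (mix S) - F q\<bar> \<le> \<epsilon> * (\<Sum>j\<in>S. \<bar>p $ j - q $ j\<bar>)" if "finite S" for S
    using that
  proof (induction S rule: finite_induct)
    case empty
    then show ?case by (simp add: mix_def)
  next
    case (insert j S)
    define t0 where "t0 = p $ j - q $ j"
    define I where "I = {min 0 t0 .. max 0 t0}"
    have line_in_cube: "mix S + t *\<^sub>R axis j 1 \<in> cube c \<eta>" if "t \<in> I" for t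
    proof -
      have "\<bar>p $ j - c $ j\<bar> < \<eta>" "\<bar>q $ j - c $ j\<bar> < \<eta>"
        using p q by (auto simp: cube_def)
      then have "\<bar>q $ j + t - c $ j\<bar> < \<eta>"
        using that unfolding I_def t0_def by (auto simp: abs_less_iff min_def max_def split: if_splits)
      then show ?thesis
        using p q insert.hyps by (auto simp: cube_def mix_def axis_def)
    qed
    have "\<bar>F (mix S + t0 *\<^sub>R axis j 1) - F (mix S + 0 *\<^sub>R axis j 1)\<bar> \<le> \<epsilon> * \<bar>t0 - 0\<bar>"
    proof (rule field_differentiable_bound[of I, simplified])
      show "convex I" by (simp add: I_def)
      show "((\<lambda>s. F (mix S + s *\<^sub>R axis j 1)) has_real_derivative F' j (mix S + t *\<^sub>R axis j 1))
              (at t within I)" if "t \<in> I" for t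
        using has_partial_deriv_along_line der line_in_cube that
        by (blast intro: has_field_derivative_at_within)
      show "\<bar>F' j (mix S + t *\<^sub>R axis j 1)\<bar> \<le> \<epsilon>" if "t \<in> I" for t
        using bound line_in_cube that by blast
      show "t0 \<in> I" "0 \<in> I" by (auto simp: I_def)
    qed
    moreover have "mix (insert j S) = mix S + t0 *\<^sub>R axis j 1"
      using insert.hyps by (auto simp: mix_def vec_eq_iff axis_def t0_def)
    ultimately have "\<bar>F (mix (insert j S)) - F (mix S)\<bar> \<le> \<epsilon> * \<bar>p $ j - q $ j\<bar>"
      by (simp add: t0_def)
    with insert.IH insert.hyps show ?case by (simp add: algebra_simps)
  qed
  from this[of UNIV] show ?thesis by (simp add: mix_def)
qed

lemma DERIV_abs_le_of_eventually_dominated: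
  fixes \<phi> :: "real \<Rightarrow> real" and \<psi> :: "'j \<Rightarrow> real \<Rightarrow> real"
  assumes "finite J" and \<phi>: "(\<phi> has_real_derivative D) (at 0)"
    and \<psi>: "\<And>j. j \<in> J \<Longrightarrow> (\<psi> j has_real_derivative E j) (at 0)"
    and dom: "eventually (\<lambda>t. \<bar>\<phi> t - \<phi> 0\<bar> \<le> e * (\<Sum>j\<in>J. \<bar>\<psi> j t - \<psi> j 0\<bar>)) (at 0)"
  shows "\<bar>D\<bar> \<le> e * (\<Sum>j\<in>J. \<bar>E j\<bar>)"
proof (rule tendsto_le)
  show "at (0::real) \<noteq> bot" by simp
  show "((\<lambda>t. e * (\<Sum>j\<in>J. \<bar>(\<psi> j t - \<psi> j 0) / t\<bar>)) \<longlongrightarrow> e * (\<Sum>j\<in>J. \<bar>E j\<bar>)) (at 0)"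
    using \<psi> by (intro tendsto_intros) (simp add: has_field_derivative_iff)
  show "((\<lambda>t. \<bar>(\<phi> t - \<phi> 0) / t\<bar>) \<longlongrightarrow> \<bar>D\<bar>) (at 0)"
    using \<phi> by (intro tendsto_intros) (simp add: has_field_derivative_iff)
  show "eventually (\<lambda>t. \<bar>(\<phi> t - \<phi> 0) / t\<bar> \<le> e * (\<Sum>j\<in>J. \<bar>(\<psi> j t - \<psi> j 0) / t\<bar>)) (at 0)"
    using dom
  proof eventually_elim
    case (elim t)
    then show ?case
      by (simp add: abs_divide divide_right_mono sum_divide_distrib[symmetric])
  qed
qed

lemma has_partial_deriv_abs_le_of_dominated:
  fixes \<psi> :: "real^'m \<Rightarrow> real" and \<gamma> :: "'j \<Rightarrow> real^'m \<Rightarrow> real"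
  assumes "open S" "u \<in> S" "finite J"
    and \<psi>: "has_partial_deriv \<psi> i u D"
    and \<gamma>: "\<And>j. j \<in> J \<Longrightarrow> has_partial_deriv (\<gamma> j) i u (E j)"
    and dom: "\<And>v. v \<in> S \<Longrightarrow> \<bar>\<psi> v - \<psi> u\<bar> \<le> e * (\<Sum>j\<in>J. \<bar>\<gamma> j v - \<gamma> j u\<bar>)"
  shows "\<bar>D\<bar> \<le> e * (\<Sum>j\<in>J. \<bar>E j\<bar>)"
proof (rule DERIV_abs_le_of_eventually_dominated[OF \<open>finite J\<close>])
  show "((\<lambda>t. \<psi> (u + t *\<^sub>R axis i 1)) has_real_derivative D) (at 0)"
    using \<psi> by (simp add: has_partial_deriv_def)
  show "((\<lambda>t. \<gamma> j (u + t *\<^sub>R axis i 1)) has_real_derivative E j) (at 0)" if "j \<in> J" for j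
    using \<gamma>[OF that] by (simp add: has_partial_deriv_def)
  have "((\<lambda>t. u + t *\<^sub>R axis i 1) \<longlongrightarrow> u + 0 *\<^sub>R axis i 1) (at 0)"
    by (intro tendsto_intros)
  then have "eventually (\<lambda>t. u + t *\<^sub>R axis i 1 \<in> S) (at 0)"
    using topological_tendstoD assms(1,2) by (metis add_0_right scaleR_zero_left)
  then show "eventually (\<lambda>t. \<bar>\<psi> (u + t *\<^sub>R axis i 1) - \<psi> (u + 0 *\<^sub>R axis i 1)\<bar>
      \<le> e * (\<Sum>j\<in>J. \<bar>\<gamma> j (u + t *\<^sub>R axis i 1) - \<gamma> j (u + 0 *\<^sub>R axis i 1)\<bar>)) (at 0)"
    by eventually_elim (simp add: dom)
qed

lemma continuous_on_UNIV_tendsto_nhds: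
  fixes g :: "'a::topological_space \<Rightarrow> 'b::topological_space"
  shows "continuous_on UNIV g \<Longrightarrow> (g \<longlongrightarrow> g a) (nhds a)"
  by (simp add: continuous_on_def tendsto_at_iff_tendsto_nhds)

lemma has_partial_deriv_unique:
  "has_partial_deriv g i u D \<Longrightarrow> has_partial_deriv g i u D' \<Longrightarrow> D = D'"
  unfolding has_partial_deriv_def by (rule DERIV_unique)

lemma Ck_on_1_UNIV_continuous_partials:
  assumes "Ck_on 1 UNIV g"
  obtains D where "\<And>i u. has_partial_deriv g i u (D i u)" "\<And>i. continuous_on UNIV (D i)"
proof -
  have "\<forall>i. \<exists>g'. (\<forall>u. has_partial_deriv g i u (g' u)) \<and> continuous_on UNIV g'"
    using assms by (simp add: One_nat_def)
  from choice[OF this] show ?thesis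
    using that by blast
qed

lemma Ck_on_1_UNIV_family_continuous_partials:
  assumes "\<And>l. Ck_on 1 UNIV (g l)"
  obtains D where "\<And>l i u. has_partial_deriv (g l) i u (D l i u)" "\<And>l i. continuous_on UNIV (D l i)"
proof -
  have "\<forall>l. \<exists>D. (\<forall>i u. has_partial_deriv (g l) i u (D i u)) \<and> (\<forall>i. continuous_on UNIV (D i))"
  proof
    fix l
    show "\<exists>D. (\<forall>i u. has_partial_deriv (g l) i u (D i u)) \<and> (\<forall>i. continuous_on UNIV (D i))"
      by (rule Ck_on_1_UNIV_continuous_partials[OF assms]) blast
  qed
  from choice[OF this] show ?thesis
    using that by blast
qed

lemma continuous_partials_small_on_cube:
  fixes \<phi>' :: "'n::finite \<Rightarrow> real^'n \<Rightarrow> real"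
  assumes "\<And>j. continuous_on UNIV (\<phi>' j)" "\<And>j. \<phi>' j b = 0" "\<epsilon> > 0"
  obtains \<eta> where "\<eta> > 0" "\<And>j w. w \<in> cube b \<eta> \<Longrightarrow> \<bar>\<phi>' j w\<bar> \<le> \<epsilon>"
proof -
  have "eventually (\<lambda>w. \<forall>j. \<bar>\<phi>' j w\<bar> < \<epsilon>) (nhds b)"
  proof (rule eventually_all_finite)
    fix j
    have "((\<lambda>w. \<bar>\<phi>' j w\<bar>) \<longlongrightarrow> 0) (nhds b)"
      using tendsto_rabs[OF continuous_on_UNIV_tendsto_nhds[OF assms(1)[of j], of b]] assms(2)[of j]
      by simp
    then show "eventually (\<lambda>w. \<bar>\<phi>' j w\<bar> < \<epsilon>) (nhds b)"
      using assms(3) by (rule order_tendstoD)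
  qed
  then obtain \<eta> where "\<eta> > 0" "\<And>w. w \<in> cube b \<eta> \<Longrightarrow> \<forall>j. \<bar>\<phi>' j w\<bar> < \<epsilon>"
    by (rule eventually_nhds_cube) blast
  then show ?thesis
    using that by (meson less_imp_le)
qed

lemma has_partial_deriv_abs_le_through_cube:
  fixes \<phi> :: "real^'n::finite \<Rightarrow> real" and \<psi> :: "real^'m \<Rightarrow> real"
    and \<gamma> :: "'n \<Rightarrow> real^'m \<Rightarrow> real"
  assumes \<phi>: "\<And>j w. w \<in> cube c \<eta> \<Longrightarrow> has_partial_deriv \<phi> j w (\<phi>' j w)"
      "\<And>j w. w \<in> cube c \<eta> \<Longrightarrow> \<bar>\<phi>' j w\<bar> \<le> \<epsilon>"
    and S: "open S" "u \<in> S" "\<And>v. v \<in> S \<Longrightarrow> (\<chi> j. \<gamma> j v) \<in> cube c \<eta> \<and> \<psi> v = \<phi> (\<chi> j. \<gamma> j v)"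
    and \<psi>: "has_partial_deriv \<psi> i u D"
    and \<gamma>: "\<And>j. has_partial_deriv (\<gamma> j) i u (E j)"
  shows "\<bar>D\<bar> \<le> \<epsilon> * (\<Sum>j\<in>UNIV. \<bar>E j\<bar>)"
proof (rule has_partial_deriv_abs_le_of_dominated[OF S(1,2) finite_class.finite_UNIV \<psi> \<gamma>])
  fix v assume "v \<in> S"
  then show "\<bar>\<psi> v - \<psi> u\<bar> \<le> \<epsilon> * (\<Sum>j\<in>UNIV. \<bar>\<gamma> j v - \<gamma> j u\<bar>)"
    using l1_lipschitz_on_cube[OF \<phi>, where p = "\<chi> j. \<gamma> j v" and q = "\<chi> j. \<gamma> j u"] S(2,3)
    by simp
qed

lemma partial_deriv_small_near_flat_approach:
  fixes \<phi> :: "real^'n::finite \<Rightarrow> real" and \<psi> :: "real^'m::finite \<Rightarrow> real"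
    and \<gamma> :: "'n \<Rightarrow> real^'m \<Rightarrow> real"
  assumes "Ck_on 1 UNIV \<phi>" and flat: "\<And>j. has_partial_deriv \<phi> j b 0"
    and \<psi>: "\<And>u. has_partial_deriv \<psi> i u (\<psi>' u)"
    and \<gamma>: "\<And>j u. has_partial_deriv (\<gamma> j) i u (\<gamma>' j u)"
    and approach: "\<And>N \<eta>. open N \<Longrightarrow> a \<in> N \<Longrightarrow> \<eta> > 0 \<Longrightarrow>
       \<exists>S. open S \<and> S \<noteq> {} \<and> S \<subseteq> N \<and>
           (\<forall>v\<in>S. (\<chi> j. \<gamma> j v) \<in> cube b \<eta> \<and> \<psi> v = \<phi> (\<chi> j. \<gamma> j v))"
    and "open N" "a \<in> N" "\<epsilon> > 0"
  shows "\<exists>u\<in>N. \<bar>\<psi>' u\<bar> \<le> \<epsilon> * (\<Sum>j\<in>UNIV. \<bar>\<gamma>' j u\<bar>)"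
proof -
  obtain \<phi>' where \<phi>': "\<And>j w. has_partial_deriv \<phi> j w (\<phi>' j w)" "\<And>j. continuous_on UNIV (\<phi>' j)"
    using Ck_on_1_UNIV_continuous_partials[OF assms(1)] by blast
  have \<phi>'_b: "\<phi>' j b = 0" for j
    using has_partial_deriv_unique[OF \<phi>'(1) flat] .
  obtain \<eta> where "\<eta> > 0" and small: "\<And>j w. w \<in> cube b \<eta> \<Longrightarrow> \<bar>\<phi>' j w\<bar> \<le> \<epsilon>"
    using continuous_partials_small_on_cube[of \<phi>' b, OF \<phi>'(2) \<phi>'_b \<open>\<epsilon> > 0\<close>] by blast
  then obtain S where S: "open S" "S \<noteq> {}" "S \<subseteq> N"
    and on_S: "\<forall>v\<in>S. (\<chi> j. \<gamma> j v) \<in> cube b \<eta> \<and> \<psi> v = \<phi> (\<chi> j. \<gamma> j v)"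
    using approach \<open>open N\<close> \<open>a \<in> N\<close> by meson
  then obtain u where "u \<in> S" by blast
  have "\<bar>\<psi>' u\<bar> \<le> \<epsilon> * (\<Sum>j\<in>UNIV. \<bar>\<gamma>' j u\<bar>)"
    by (rule has_partial_deriv_abs_le_through_cube[OF \<phi>'(1) small S(1) \<open>u \<in> S\<close> on_S[rule_format]
          \<psi> \<gamma>])
  then show ?thesis
    using \<open>u \<in> S\<close> S(3) by blast
qed

lemma partial_deriv_zero_at_flat_approach:
  fixes \<phi> :: "real^'n::finite \<Rightarrow> real" and \<psi> :: "real^'m::finite \<Rightarrow> real"
    and \<gamma> :: "'n \<Rightarrow> real^'m \<Rightarrow> real"
  assumes C1: "Ck_on 1 UNIV \<phi>" "Ck_on 1 UNIV \<psi>" "\<And>j. Ck_on 1 UNIV (\<gamma> j)"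
    and flat: "\<And>j. has_partial_deriv \<phi> j b 0"
    and d: "has_partial_deriv \<psi> i a d"
    and approach: "\<And>N \<eta>. open N \<Longrightarrow> a \<in> N \<Longrightarrow> \<eta> > 0 \<Longrightarrow>
       \<exists>S. open S \<and> S \<noteq> {} \<and> S \<subseteq> N \<and>
           (\<forall>v\<in>S. (\<chi> j. \<gamma> j v) \<in> cube b \<eta> \<and> \<psi> v = \<phi> (\<chi> j. \<gamma> j v))"
  shows "d = 0"
proof (rule ccontr)
  assume "d \<noteq> 0"
  obtain \<psi>' where \<psi>': "\<And>j u. has_partial_deriv \<psi> j u (\<psi>' j u)" "\<And>j. continuous_on UNIV (\<psi>' j)"
    using Ck_on_1_UNIV_continuous_partials[OF C1(2)] by blast
  obtain \<gamma>' where \<gamma>': "\<And>l j u. has_partial_deriv (\<gamma> l) j u (\<gamma>' l j u)"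
    "\<And>l j. continuous_on UNIV (\<gamma>' l j)"
    using Ck_on_1_UNIV_family_continuous_partials[of \<gamma>, OF C1(3)] by blast
  have "\<psi>' i a = d"
    using has_partial_deriv_unique[OF \<psi>'(1) d] .
  define M where "M = (\<Sum>l\<in>UNIV. \<bar>\<gamma>' l i a\<bar>) + 1"
  define \<epsilon> where "\<epsilon> = \<bar>d\<bar> / (2 * M)"
  have "M > 0" by (simp add: M_def add_nonneg_pos sum_nonneg)
  then have "\<epsilon> > 0" using \<open>d \<noteq> 0\<close> by (simp add: \<epsilon>_def)
  have "eventually (\<lambda>u. \<bar>d\<bar> / 2 < \<bar>\<psi>' i u\<bar> \<and> (\<Sum>l\<in>UNIV. \<bar>\<gamma>' l i u\<bar>) < M) (nhds a)"
  proof (rule eventually_conj)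
    show "eventually (\<lambda>u. \<bar>d\<bar> / 2 < \<bar>\<psi>' i u\<bar>) (nhds a)"
      using tendsto_rabs[OF continuous_on_UNIV_tendsto_nhds[OF \<psi>'(2)[of i], of a]]
      by (rule order_tendstoD) (simp add: \<open>\<psi>' i a = d\<close> \<open>d \<noteq> 0\<close>)
    have "continuous_on UNIV (\<lambda>u. \<Sum>l\<in>UNIV. \<bar>\<gamma>' l i u\<bar>)"
      using \<gamma>'(2) by (intro continuous_intros)
    then show "eventually (\<lambda>u. (\<Sum>l\<in>UNIV. \<bar>\<gamma>' l i u\<bar>) < M) (nhds a)"
      by (rule order_tendstoD[OF continuous_on_UNIV_tendsto_nhds]) (simp add: M_def)
  qed
  then obtain N where "open N" "a \<in> N"
    and near_a: "\<And>u. u \<in> N \<Longrightarrow> \<bar>d\<bar> / 2 < \<bar>\<psi>' i u\<bar> \<and> (\<Sum>l\<in>UNIV. \<bar>\<gamma>' l i u\<bar>) < M"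
    unfolding eventually_nhds by blast
  then obtain u where u: "u \<in> N" "\<bar>\<psi>' i u\<bar> \<le> \<epsilon> * (\<Sum>l\<in>UNIV. \<bar>\<gamma>' l i u\<bar>)"
    using partial_deriv_small_near_flat_approach[where \<psi>' = "\<psi>' i" and \<gamma>' = "\<lambda>l. \<gamma>' l i",
        OF C1(1) flat \<psi>'(1) \<gamma>'(1) approach \<open>open N\<close> \<open>a \<in> N\<close> \<open>\<epsilon> > 0\<close>]
    by blast
  note u(2)
  also have "\<dots> < \<epsilon> * M"
    using near_a[OF u(1)] \<open>\<epsilon> > 0\<close> by simp
  also have "\<dots> = \<bar>d\<bar> / 2"
    using \<open>M > 0\<close> by (simp add: \<epsilon>_def)
  finally show False
    using near_a[OF u(1)] by linarith
qed

lemma is_chart_continuous_map: "is_chart V h \<Longrightarrow> continuous_map euclidean V h"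
  unfolding is_chart_def
  using homeomorphic_imp_continuous_map continuous_map_in_subtopology by metis

lemma is_chart_inj: "is_chart V h \<Longrightarrow> inj h"
  unfolding is_chart_def using homeomorphic_imp_injective_map by (metis topspace_euclidean)

lemma is_chart_range_subset: "is_chart V h \<Longrightarrow> range h \<subseteq> topspace V"
  unfolding is_chart_def by (simp add: openin_subset)

lemma is_chart_openin_image:
  assumes "is_chart V h" "open S"
  shows "openin V (h ` S)"
proof -
  have "openin (subtopology V (range h)) (h ` S)"
    using assms homeomorphic_imp_open_map unfolding is_chart_def open_map_def
    by (metis open_openin)
  then show ?thesis
    using assms(1) openin_trans_full unfolding is_chart_def by metis
qed

lemma Cr_on_imp_Ck_on_1:
  assumes "Cr_on r S g" "r \<ge> 1"
  shows "Ck_on 1 S g"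
proof -
  have "enat 1 \<le> r"
    using assms(2) by (simp add: one_enat_def)
  then show ?thesis
    using assms(1) unfolding Cr_on_def by blast
qed

lemma Cr_fun_on_chart_Ck_on_1:
  assumes "is_chart V h" "h \<in> A" "r \<ge> 1" "Cr_fun_on A r (topspace V) f"
  shows "Ck_on 1 UNIV (f \<circ> h)"
proof -
  have "Cr_on r (h -` topspace V) (f \<circ> h)"
    using assms(2,4) unfolding Cr_fun_on_def by blast
  moreover have "h -` topspace V = UNIV"
    using is_chart_range_subset[OF assms(1)] by blast
  ultimately have "Cr_on r UNIV (f \<circ> h)"
    by simp
  then show ?thesis
    using assms(3) by (rule Cr_on_imp_Ck_on_1)
qed

lemma not_rank1_at_partials_zero:
  assumes "Ck_on 1 UNIV (f \<circ> k)" "k \<in> A" "y \<in> range k" "\<not> rank1_at A f y"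
  shows "has_partial_deriv (f \<circ> k) j (inv k y) 0"
proof -
  obtain D where D: "\<And>j w. has_partial_deriv (f \<circ> k) j w (D j w)"
    by (metis Ck_on_1_UNIV_continuous_partials[OF assms(1)])
  have "D j (inv k y) = 0"
  proof (rule ccontr)
    assume "D j (inv k y) \<noteq> 0"
    then have "rank1_at A f y"
      unfolding rank1_at_def using assms(2,3) D[of j "inv k y"] by (intro bexI[of _ k]) auto
    then show False
      using assms(4) by simp
  qed
  then show ?thesis
    using D[of j "inv k y"] by simp
qed

lemma Cr_fun_on_chart_coordinate:
  assumes "Cr_structure V A r" "k \<in> A"
  shows "Cr_fun_on A r (range k) (\<lambda>z. inv k z $ j)"
  using assms unfolding Cr_structure_def Cr_fun_on_def Cr_map_on_def transition_def
  by (simp add: o_def)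

lemma regular_extends_chart_coordinates:
  assumes "Cr_structure V A r" "regular_structure V A r" "k \<in> A" "y \<in> range k"
  obtains G W where "\<And>j. Cr_fun_on A r (topspace V) (G j)" "openin V W" "y \<in> W"
    "\<And>z j. z \<in> W \<Longrightarrow> G j z = inv k z $ j"
proof -
  have "openin V (range k)"
    using assms(1,3) unfolding Cr_structure_def is_chart_def by blast
  then have "y \<in> topspace V"
    using assms(4) openin_subset by blast
  have "\<exists>G W. Cr_fun_on A r (topspace V) G \<and> openin V W \<and> y \<in> W \<and> (\<forall>z\<in>W. G z = inv k z $ j)"
    for j
    using assms(2) \<open>y \<in> topspace V\<close> \<open>openin V (range k)\<close> assms(4)
      Cr_fun_on_chart_coordinate[OF assms(1,3), of j]
    unfolding regular_structure_def by blast
  then obtain G W where GW: "\<And>j. Cr_fun_on A r (topspace V) (G j) \<and> openin V (W j) \<and> y \<in> W j \<and>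
      (\<forall>z\<in>W j. G j z = inv k z $ j)"
    by metis
  show ?thesis
  proof (rule that[of G "\<Inter>j. W j"])
    show "openin V (\<Inter>j. W j)"
      using GW by (intro openin_INT2) auto
  qed (use GW in auto)
qed

lemma chart_coordinates_of_image:
  assumes "inj k" "z \<in> W \<inter> k ` C" "\<And>z j. z \<in> W \<Longrightarrow> G j z = inv k z $ j"
  shows "(\<chi> j. G j z) \<in> C \<and> z = k (\<chi> j. G j z)"
proof -
  obtain w where "w \<in> C" "z = k w" "z \<in> W"
    using assms(2) by blast
  moreover have "(\<chi> j. G j z) = w"
    using calculation assms(3) by (simp add: vec_eq_iff inv_f_f[OF assms(1)])
  ultimately show ?thesis by simp
qed

lemma not_separated_chart_approach:
  assumes h: "is_chart V h" and k: "is_chart V k" and "not_separated V (h a) (k b)"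
    and "openin V W" "k b \<in> W" and coordinates: "\<And>z j. z \<in> W \<Longrightarrow> G j z = inv k z $ j"
    and "open N" "a \<in> N" "\<eta> > 0"
  obtains S where "open S" "S \<noteq> {}" "S \<subseteq> N"
    "\<And>v. v \<in> S \<Longrightarrow> (\<chi> j. G j (h v)) \<in> cube b \<eta> \<and> h v = k (\<chi> j. G j (h v))"
proof -
  have "openin V (W \<inter> k ` cube b \<eta>)"
    using assms(4) is_chart_openin_image[OF k open_cube] by blast
  moreover have "k b \<in> W \<inter> k ` cube b \<eta>"
    using assms(5,9) centre_in_cube by blast
  ultimately have "h ` N \<inter> (W \<inter> k ` cube b \<eta>) \<noteq> {}"
    using assms(3,7,8) is_chart_openin_image[OF h] unfolding not_separated_def by blast
  moreover have "open (h -` (W \<inter> k ` cube b \<eta>))"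
  proof -
    have "{v \<in> topspace euclidean. h v \<in> W \<inter> k ` cube b \<eta>} = h -` (W \<inter> k ` cube b \<eta>)"
      by auto
    then show ?thesis
      using openin_continuous_map_preimage[OF is_chart_continuous_map[OF h]
          \<open>openin V (W \<inter> k ` cube b \<eta>)\<close>]
      by (simp only: open_openin)
  qed
  then have "open (N \<inter> h -` (W \<inter> k ` cube b \<eta>))"
    using assms(7) by (rule open_Int[rotated])
  moreover have "(\<chi> j. G j (h v)) \<in> cube b \<eta> \<and> h v = k (\<chi> j. G j (h v))"
    if "v \<in> N \<inter> h -` (W \<inter> k ` cube b \<eta>)" for v
    using chart_coordinates_of_image[OF is_chart_inj[OF k] _ coordinates] that by blast
  ultimately show ?thesis
    using that[of "N \<inter> h -` (W \<inter> k ` cube b \<eta>)"] by blast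
qed

theorem lemma2:
  fixes V :: "'a topology" and A :: "(real^'n \<Rightarrow> 'a) set" and r :: enat
    and f :: "'a \<Rightarrow> real" and x y :: 'a
  assumes "Cr_structure V A r" and "r \<ge> 1" and "regular_structure V A r"
    and "Cr_fun_on A r (topspace V) f"
    and "x \<in> topspace V" and "rank1_at A f x"
    and "y \<in> topspace V" and "not_separated V x y"
  shows "rank1_at A f y"
proof (rule ccontr)
  assume not_rank1_y: "\<not> rank1_at A f y"
  have chart: "\<And>h. h \<in> A \<Longrightarrow> is_chart V h"
    using assms(1) by (simp add: Cr_structure_def)
  have C1: "\<And>h g. h \<in> A \<Longrightarrow> Cr_fun_on A r (topspace V) g \<Longrightarrow> Ck_on 1 UNIV (g \<circ> h)"
    using Cr_fun_on_chart_Ck_on_1 chart assms(2) by blast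
  obtain h i d where h: "h \<in> A" "x \<in> range h"
    and d: "has_partial_deriv (f \<circ> h) i (inv h x) d" "d \<noteq> 0"
    using assms(6) unfolding rank1_at_def by blast
  obtain k where k: "k \<in> A" "y \<in> range k"
    using assms(1,7) unfolding Cr_structure_def by blast
  obtain G W where G: "\<And>j. Cr_fun_on A r (topspace V) (G j)"
    and W: "openin V W" "y \<in> W" "\<And>z j. z \<in> W \<Longrightarrow> G j z = inv k z $ j"
    using regular_extends_chart_coordinates[OF assms(1,3) k] by blast
  have "d = 0"
  proof (rule partial_deriv_zero_at_flat_approach[where \<gamma> = "\<lambda>j. G j \<circ> h",
        OF C1[OF k(1) assms(4)] C1[OF h(1) assms(4)] C1[OF h(1) G]
        not_rank1_at_partials_zero[OF C1[OF k(1) assms(4)] k not_rank1_y] d(1)])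
    fix N and \<eta> :: real
    assume N: "open N" "inv h x \<in> N" and "\<eta> > 0"
    have separation: "not_separated V (h (inv h x)) (k (inv k y))" and "k (inv k y) \<in> W"
      using assms(8) h(2) k(2) W(2) by (simp_all add: f_inv_into_f)
    obtain S where "open S" "S \<noteq> {}" "S \<subseteq> N"
      and "\<And>v. v \<in> S \<Longrightarrow> (\<chi> j. G j (h v)) \<in> cube (inv k y) \<eta> \<and> h v = k (\<chi> j. G j (h v))"
      using not_separated_chart_approach[OF chart[OF h(1)] chart[OF k(1)] separation W(1)
          \<open>k (inv k y) \<in> W\<close> W(3) N \<open>\<eta> > 0\<close>] by blast
    then show "\<exists>S. open S \<and> S \<noteq> {} \<and> S \<subseteq> N \<and> (\<forall>v\<in>S. (\<chi> j. (G j \<circ> h) v) \<in> cube (inv k y) \<eta> \<and>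
        (f \<circ> h) v = (f \<circ> k) (\<chi> j. (G j \<circ> h) v))"
      by (intro exI[of _ S]) auto
  qed
  with d(2) show False by simp
qed

end
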